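(* Fix $\alpha>0$, and let $h:[0,\infty)\to[0,\infty)$ be an increasing function with $h(t)\to\infty$ as $t\to\infty$ such that, for some $\rho\in(0,1)$, $\log h(t)<\rho\,(\alpha\wedge1)\log\log t$ for all sufficiently large $t$. Then there exists a non-negative random variable $X$ satisfying $\mathbb{E}[X^p]\le \frac{C}{\alpha-p}$ for all $p\in(0,\alpha)$ and some constant $C>0$ (equivalently, $\int_0^r y^{\alpha-1}\mathbb{P}(X\ge y)\,\mathrm{d}y\le C'\log r$ for all $r\ge\mathrm{e}$ and some $C'>0$), such that $$\limsup_{t\to\infty}\frac{t^\alpha\,\mathbb{P}(X\ge t)}{h(t)}\ge 1.$$ If moreover $\log h(t)=o(\log\log t)$ as $t\to\infty$, then $X$ can be chosen such that $t\mapsto\mathbb{P}(X\ge t)$ is regularly varying with index $-\alpha$.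
   Context: $\alpha\wedge 1=\min(\alpha,1)$. A function $g:(0,\infty)\to(0,\infty)$ is regularly varying with index $\beta\in\mathbb{R}$ if $\lim_{t\to\infty} g(at)/g(t)=a^\beta$ for every $a>0$. *)

theory Defs
  imports "HOL-Probability.Probability" "HOL-Library.Landau_Symbols"
begin

definition regularly_varying :: "(real \<Rightarrow> real) \<Rightarrow> real \<Rightarrow> bool" where
  "regularly_varying g \<beta> \<longleftrightarrow>
     (\<forall>t>0. g t > 0) \<and>
     (\<forall>a>0. ((\<lambda>t. g (a * t) / g t) \<longlongrightarrow> a powr \<beta>) at_top)"

end

theory Submission
  imports Defs "HOL-Real_Asymp.Real_Asymp"
begin

text \<open>
  The tail is built as \<open>P(X \<ge> t) = t powr -\<alpha> * exp (\<phi> (ln t))\<close>, where the profile \<open>\<phi>\<close>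
  is a sum of tents, one on each dyadic block \<open>[2^k, 2^(k+1))\<close> of the logarithmic scale.
  The k-th tent has height about \<open>1 + ln h (exp (2^(k+1)))\<close> and slope \<open>c / (k + 1)\<close>. Its
  peak lies below \<open>exp (2^(k+1))\<close>, so there the tail times \<open>t powr \<alpha>\<close> exceeds \<open>h t\<close> by
  monotonicity of \<open>h\<close>. Since \<open>\<phi>\<close> is \<open>\<alpha>/2\<close>-Lipschitz the tail is decreasing, and slopes
  tending to 0 make it regularly varying with index \<open>-\<alpha>\<close>, even without the hypothesis
  \<open>ln h = o(ln ln t)\<close>, so one variable serves both claims. For the moments,
  \<open>E X^p \<le> C / (\<alpha> - p)\<close> reduces to the summability of \<open>(exp (\<phi> j) - 1) / j\<close>. Capping the
  tent heights by \<open>ln (2^k / (k + 1)^4)\<close> makes each block contribute \<open>O(1 / (k + 1)^2)\<close>, and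
  the growth hypothesis on \<open>h\<close> is exactly what keeps this cap inactive for large \<open>k\<close>.
\<close>

lemma card_nat_interval_le:
  assumes "a \<le> b"
  shows "real (card {j::nat. a \<le> real j \<and> real j \<le> b}) \<le> b - a + 1"
proof -
  have sub: "{j::nat. a \<le> real j \<and> real j \<le> b} \<subseteq> {nat \<lceil>a\<rceil>..nat \<lfloor>b\<rfloor>}"
    by (auto simp: le_nat_iff ceiling_le_iff le_floor_iff)
  have "card {j::nat. a \<le> real j \<and> real j \<le> b} \<le> card {nat \<lceil>a\<rceil>..nat \<lfloor>b\<rfloor>}"
    by (rule card_mono[OF _ sub]) simp
  hence "real (card {j::nat. a \<le> real j \<and> real j \<le> b}) \<le> real (nat \<lfloor>b\<rfloor> + 1 - nat \<lceil>a\<rceil>)"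
    by simp
  also have "\<dots> \<le> b - a + 1"
    using assms by (cases "nat \<lceil>a\<rceil> \<le> nat \<lfloor>b\<rfloor> + 1") (auto simp: of_nat_diff, linarith+)
  finally show ?thesis .
qed

lemma finite_nat_interval: "finite {j::nat. a \<le> real j \<and> real j \<le> b}"
  by (rule finite_subset[of _ "{..nat \<lfloor>b\<rfloor>}"]) (auto simp: le_nat_iff le_floor_iff)

definition survival_pmf :: "(nat \<Rightarrow> real) \<Rightarrow> nat pmf" where
  "survival_pmf S = embed_pmf (\<lambda>n. S n - S (Suc n))"

lemma prob_survival_pmf_atLeast:
  assumes S0: "S 0 = 1" and S_dec: "\<And>n. S (Suc n) \<le> S n" and S_lim: "S \<longlonglongrightarrow> 0"
  shows "measure_pmf.prob (survival_pmf S) {N..} = S N"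
proof -
  have s: "(\<lambda>n. S n - S (Suc n)) sums 1"
    using telescope_sums'[OF S_lim] S0 by simp
  have nn: "\<And>n. 0 \<le> S n - S (Suc n)" using S_dec by simp
  have "(\<integral>\<^sup>+n. ennreal (S n - S (Suc n)) \<partial>count_space UNIV) = 1"
    using suminf_ennreal2[OF nn sums_summable[OF s]] sums_unique[OF s]
    by (simp add: nn_integral_count_space_nat)
  hence pmf_S: "\<And>n. pmf (survival_pmf S) n = S n - S (Suc n)"
    unfolding survival_pmf_def by (intro pmf_embed_pmf nn)
  have "measure_pmf.prob (survival_pmf S) {..<N} = (\<Sum>n<N. S n - S (Suc n))"
    by (simp add: measure_measure_pmf_finite pmf_S)
  also have "\<dots> = 1 - S N" using S0 by (simp add: sum_lessThan_telescope')
  finally show ?thesis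
    using measure_pmf.prob_compl[of "{..<N}" "survival_pmf S"] by (simp add: Compl_eq_Diff_UNIV[symmetric])
qed

lemma ennreal_term_le_suminf: "(f :: nat \<Rightarrow> ennreal) n \<le> suminf f"
  using sum_le_suminf[of f "{n}"] by simp

lemma powr_le_tail_series:
  fixes y p :: real
  assumes p: "0 < p" and y: "0 \<le> y"
  shows "ennreal (y powr p) \<le> 1 + (\<Sum>j. ennreal (exp ((real j + 1) * p)) * indicator {exp (real j)..} y)"
proof (cases "y < 1")
  case True
  have "y powr p \<le> 1"
    using True p y by (cases "y = 0") (auto intro!: powr_le1)
  hence "ennreal (y powr p) \<le> 1" by (simp add: ennreal_le_1)
  thus ?thesis by (rule order_trans) simp
next
  case False
  define J where "J = nat \<lfloor>ln y\<rfloor>"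
  have J: "real J \<le> ln y" "ln y < real J + 1" using False by (auto simp: J_def)
  have "exp (real J) \<le> y" using J(1) False by (simp add: ln_ge_iff)
  moreover have "y powr p \<le> exp ((real J + 1) * p)"
    using False J(2) p by (simp add: powr_def mult.commute)
  ultimately have "ennreal (y powr p) \<le> ennreal (exp ((real J + 1) * p)) * indicator {exp (real J)..} y"
    by (simp add: ennreal_leI)
  also have "\<dots> \<le> (\<Sum>j. ennreal (exp ((real j + 1) * p)) * indicator {exp (real j)..} y)"
    by (rule ennreal_term_le_suminf)
  finally show ?thesis by (rule order_trans) simp
qed

lemma (in prob_space) nn_integral_powr_le_tail_series:
  assumes X: "X \<in> borel_measurable M" and p: "0 < p"
  shows "(\<integral>\<^sup>+x. ennreal (max 0 (X x) powr p) \<partial>M)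
           \<le> 1 + (\<Sum>j. ennreal (exp ((real j + 1) * p)) * emeasure M {x\<in>space M. exp (real j) \<le> max 0 (X x)})"
proof -
  let ?A = "\<lambda>j. {x\<in>space M. exp (real j) \<le> max 0 (X x)}"
  have A: "?A j \<in> sets M" for j using X by measurable
  have "(\<integral>\<^sup>+x. ennreal (max 0 (X x) powr p) \<partial>M)
        \<le> (\<integral>\<^sup>+x. 1 + (\<Sum>j. ennreal (exp ((real j + 1) * p)) * indicator (?A j) x) \<partial>M)"
  proof (rule nn_integral_mono)
    fix x assume "x \<in> space M"
    then show "ennreal (max 0 (X x) powr p) \<le> 1 + (\<Sum>j. ennreal (exp ((real j + 1) * p)) * indicator (?A j) x)"
      using powr_le_tail_series[OF p, of "max 0 (X x)"] by (simp add: indicator_def)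
  qed
  also have "\<dots> = 1 + (\<Sum>j. \<integral>\<^sup>+x. ennreal (exp ((real j + 1) * p)) * indicator (?A j) x \<partial>M)"
    using A by (simp add: nn_integral_add nn_integral_suminf emeasure_space_1)
  also have "\<dots> = 1 + (\<Sum>j. ennreal (exp ((real j + 1) * p)) * emeasure M (?A j))"
    using A by (simp add: nn_integral_cmult_indicator)
  finally show ?thesis .
qed

lemma ln_ceiling_minus_ln_bounds:
  fixes s :: real
  assumes "1 \<le> s"
  shows "0 \<le> ln (real_of_int \<lceil>s\<rceil>) - ln s" and "ln (real_of_int \<lceil>s\<rceil>) - ln s \<le> 1 / s"
proof -
  have s0: "s > 0" using assms by simp
  have c: "s \<le> real_of_int \<lceil>s\<rceil>" "real_of_int \<lceil>s\<rceil> \<le> s + 1" by linarith+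
  show "0 \<le> ln (real_of_int \<lceil>s\<rceil>) - ln s" using c s0 by simp
  have "ln (real_of_int \<lceil>s\<rceil>) \<le> ln (s + 1)" using c s0 by simp
  also have "ln (s + 1) = ln (s * (1 + 1/s))" using s0 by (simp add: distrib_left)
  also have "\<dots> = ln s + ln (1 + 1/s)" using s0 by (intro ln_mult_pos) (auto intro: add_pos_pos)
  also have "ln (1 + 1/s) \<le> 1/s" using s0 by (intro ln_add_one_self_le_self) auto
  finally show "ln (real_of_int \<lceil>s\<rceil>) - ln s \<le> 1 / s" by simp
qed

lemma tendsto_ln_ceiling_minus_ln: "((\<lambda>s. ln (real_of_int \<lceil>s\<rceil>) - ln s) \<longlongrightarrow> 0) at_top"
proof (rule Lim_null_comparison)
  show "\<forall>\<^sub>F s in at_top. norm (ln (real_of_int \<lceil>s\<rceil>) - ln s) \<le> 1 / s"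
    using eventually_ge_at_top[of "1::real"]
    by eventually_elim (use ln_ceiling_minus_ln_bounds in auto)
  show "((\<lambda>s::real. 1 / s) \<longlongrightarrow> 0) at_top" by real_asymp
qed

lemma filterlim_ln_ceiling_at_top: "filterlim (\<lambda>s::real. ln (real_of_int \<lceil>s\<rceil>)) at_top at_top"
proof -
  have "eventually (\<lambda>s. ln s \<le> ln (real_of_int \<lceil>s\<rceil>)) at_top"
    using eventually_ge_at_top[of "1::real"]
    by eventually_elim (use ln_ceiling_minus_ln_bounds in auto)
  then show ?thesis using filterlim_at_top_mono[OF ln_at_top] by simp
qed

lemma tendsto_ln_ceiling_scale:
  fixes c :: real
  assumes c: "c > 0"
  shows "((\<lambda>t. ln (real_of_int \<lceil>c * t\<rceil>) - ln (real_of_int \<lceil>t\<rceil>)) \<longlongrightarrow> ln c) at_top"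
proof -
  let ?d = "\<lambda>s::real. ln (real_of_int \<lceil>s\<rceil>) - ln s"
  have ct: "filterlim (\<lambda>t. c * t) at_top at_top"
    by (rule filterlim_tendsto_pos_mult_at_top[OF tendsto_const c filterlim_ident])
  have "((\<lambda>t. ?d (c * t) - ?d t + ln c) \<longlongrightarrow> 0 - 0 + ln c) at_top"
    using tendsto_add[OF tendsto_diff[OF filterlim_compose[OF tendsto_ln_ceiling_minus_ln ct]
          tendsto_ln_ceiling_minus_ln] tendsto_const] .
  moreover have "eventually (\<lambda>t. ?d (c * t) - ?d t + ln c
                   = ln (real_of_int \<lceil>c * t\<rceil>) - ln (real_of_int \<lceil>t\<rceil>)) at_top"
    using eventually_gt_at_top[of "0::real"] by eventually_elim (use c in \<open>simp add: ln_mult_pos\<close>)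
  ultimately show ?thesis by (simp add: tendsto_cong)
qed

locale heavy_tail_construction =
  fixes \<alpha> :: real and h :: "real \<Rightarrow> real"
  assumes alpha_pos: "\<alpha> > 0"
begin

definition slope_max :: real where
  "slope_max = min (\<alpha>/4) 1"

definition slope :: "nat \<Rightarrow> real" where
  "slope k = slope_max / (real k + 1)"

definition centre :: "nat \<Rightarrow> real" where
  "centre k = 3 * 2^k / 2"

definition height_target :: "nat \<Rightarrow> real" where
  "height_target k = 1 + ln (max 1 (h (exp (2^(k+1)))))"

definition height_cap :: "nat \<Rightarrow> real" where
  "height_cap k = min (ln (2^k / (real k + 1)^4)) (slope_max * 2^k / (2 * (real k + 1)))"

definition tent_height :: "nat \<Rightarrow> real" where
  "tent_height k = min (height_target k) (height_cap k)"

definition tent :: "nat \<Rightarrow> real \<Rightarrow> real" where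
  "tent k x = max 0 (tent_height k - slope k * \<bar>x - centre k\<bar>)"

definition block :: "real \<Rightarrow> nat" where
  "block x = nat \<lfloor>log 2 x\<rfloor>"

definition profile :: "real \<Rightarrow> real" where
  "profile x = tent (block x) x"

text \<open>
  The second bound in \<open>height_cap\<close> makes \<open>tent k\<close> vanish outside \<open>[2^k, 2^(k+1))\<close>.
  For \<open>x < 1\<close> the junk value \<open>block x = 0\<close> is harmless, as \<open>tent 0\<close> vanishes there.
\<close>

lemma slope_max_pos: "slope_max > 0"
  using alpha_pos by (simp add: slope_max_def)

lemma slope_max_le_1: "slope_max \<le> 1"
  by (simp add: slope_max_def)

lemma slope_nonneg: "slope k \<ge> 0"
  using slope_max_pos by (simp add: slope_def)

lemma slope_le: "slope k \<le> slope_max"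
  using slope_max_pos by (auto simp: slope_def divide_le_eq)

lemma slope_antimono: "k \<le> m \<Longrightarrow> slope m \<le> slope k"
  using slope_max_pos by (auto simp: slope_def intro!: divide_left_mono)

lemma tent_height_le_half_width: "tent_height k \<le> slope k * 2^k / 2"
proof -
  have "tent_height k \<le> slope_max * 2^k / (2 * (real k + 1))" by (simp add: tent_height_def height_cap_def)
  also have "\<dots> = slope k * 2^k / 2" by (simp add: slope_def)
  finally show ?thesis .
qed

lemma tent_height_le: "tent_height k \<le> real k"
proof -
  have "tent_height k \<le> ln (2^k / (real k + 1)^4)" by (simp add: tent_height_def height_cap_def)
  also have "\<dots> \<le> ln (2^k)" by (intro ln_mono) (auto simp: divide_le_eq one_le_power)
  also have "\<dots> = real k * ln 2" by (simp add: ln_realpow)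
  also have "\<dots> \<le> real k" using ln_2_less_1 by (simp add: mult_left_le)
  finally show ?thesis .
qed

lemma tent_nonneg: "tent k x \<ge> 0"
  by (simp add: tent_def)

lemma tent_eq_0_outside:
  assumes "x < 2^k \<or> x \<ge> 2^(k+1)"
  shows "tent k x = 0"
proof -
  have "\<bar>x - centre k\<bar> \<ge> 2^k/2" using assms by (auto simp: centre_def abs_if)
  hence "slope k * \<bar>x - centre k\<bar> \<ge> slope k * 2^k / 2"
    using slope_nonneg by (metis mult_left_mono times_divide_eq_right)
  thus ?thesis using tent_height_le_half_width[of k] by (simp add: tent_def)
qed

lemma tent_lipschitz: "\<bar>tent k y - tent k x\<bar> \<le> slope k * \<bar>y - x\<bar>"
proof -
  have "slope k * \<bar>\<bar>y - centre k\<bar> - \<bar>x - centre k\<bar>\<bar> \<le> slope k * \<bar>y - x\<bar>"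
    using slope_nonneg by (intro mult_left_mono) linarith+
  hence "\<bar>slope k * \<bar>y - centre k\<bar> - slope k * \<bar>x - centre k\<bar>\<bar> \<le> slope k * \<bar>y - x\<bar>"
    using slope_nonneg by (simp add: abs_mult right_diff_distrib[symmetric])
  thus ?thesis unfolding tent_def by linarith
qed

lemma block_bounds:
  assumes "x \<ge> 1"
  shows "2^block x \<le> x" and "x < 2^(block x + 1)"
proof -
  have "\<lfloor>log 2 x\<rfloor> = int (block x)" using assms by (simp add: block_def)
  hence "2 powr (real (block x)) \<le> x \<and> x < 2 powr (real (block x) + 1)"
    using floor_log_eq_powr_iff[of x 2 "int (block x)"] assms by simp
  thus "2^block x \<le> x" "x < 2^(block x + 1)"
    by (simp_all add: powr_realpow[symmetric] powr_add)
qed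

lemma block_eqI:
  assumes "2^k \<le> x" "x < 2^(k+1)"
  shows "block x = k"
proof -
  have "x > 0" using assms(1) by (smt (verit) zero_less_power)
  hence "\<lfloor>log 2 x\<rfloor> = int k"
    using floor_log_eq_powr_iff[of x 2 "int k"] assms by (simp add: powr_realpow powr_add)
  thus ?thesis by (simp add: block_def)
qed

lemma block_mono: "0 \<le> x \<Longrightarrow> x \<le> y \<Longrightarrow> block x \<le> block y"
  unfolding block_def
  by (cases "x > 0") (auto intro!: nat_mono floor_mono simp: log_def divide_right_mono)

lemma tent_other_block:
  assumes "x \<ge> 0" "block x \<noteq> k"
  shows "tent k x = 0"
proof (cases "x \<ge> 1")
  case True
  note b = block_bounds[OF True]
  show ?thesis
  proof (cases "block x < k")
    case True
    hence "(2::real)^(block x + 1) \<le> 2^k" by (intro power_increasing) auto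
    thus ?thesis using b by (intro tent_eq_0_outside) auto
  next
    case False
    hence "(2::real)^(k+1) \<le> 2^block x" using assms(2) by (intro power_increasing) auto
    thus ?thesis using b by (intro tent_eq_0_outside) auto
  qed
next
  case False
  hence "x < 2^k" using one_le_power[of "2::real" k] by linarith
  thus ?thesis by (intro tent_eq_0_outside) auto
qed

lemma profile_in_block: "2^k \<le> x \<Longrightarrow> x < 2^(k+1) \<Longrightarrow> profile x = tent k x"
  by (simp add: profile_def block_eqI)

lemma profile_nonneg: "profile x \<ge> 0"
  by (simp add: profile_def tent_nonneg)

lemma profile_0: "profile 0 = 0"
  using tent_eq_0_outside[of 0 0] by (simp add: profile_def block_def log_def)

text \<open>Between two blocks both tents involved vanish at the far end, hence the factor 2.\<close>

lemma profile_lipschitz: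
  assumes "0 \<le> x" "x \<le> y"
  shows "\<bar>profile y - profile x\<bar> \<le> 2 * slope (block x) * (y - x)"
proof (cases "block x = block y")
  case True
  thus ?thesis using tent_lipschitz[of "block x" y x] assms slope_nonneg[of "block x"]
    by (simp add: profile_def)
next
  case False
  have "profile y - profile x
          = (tent (block y) y - tent (block y) x) + (tent (block x) y - tent (block x) x)"
    using tent_other_block[of x "block y"] tent_other_block[of y "block x"] False assms
    by (simp add: profile_def)
  hence "\<bar>profile y - profile x\<bar> \<le> slope (block y) * (y - x) + slope (block x) * (y - x)"
    using tent_lipschitz[of "block y" y x] tent_lipschitz[of "block x" y x] assms by simp
  also have "\<dots> \<le> 2 * slope (block x) * (y - x)"
    using mult_right_mono[OF slope_antimono[OF block_mono[OF assms]], of "y - x"] assms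
    by (simp add: mult.commute)
  finally show ?thesis .
qed

lemma profile_lipschitz_sym:
  assumes "0 \<le> x" "0 \<le> y"
  shows "\<bar>profile y - profile x\<bar> \<le> 2 * (slope (block x) + slope (block y)) * \<bar>y - x\<bar>"
proof (cases "x \<le> y")
  case True
  have "\<bar>profile y - profile x\<bar> \<le> 2 * slope (block x) * \<bar>y - x\<bar>"
    using profile_lipschitz[OF assms(1) True] True by simp
  thus ?thesis using slope_nonneg[of "block y"] by (smt (verit) abs_ge_zero mult_right_mono)
next
  case False
  have "\<bar>profile x - profile y\<bar> \<le> 2 * slope (block y) * \<bar>x - y\<bar>"
    using profile_lipschitz[OF assms(2)] False by simp
  thus ?thesis using slope_nonneg[of "block x"]
    by (smt (verit) abs_ge_zero abs_minus_commute mult_right_mono)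
qed

lemma profile_increment_le:
  assumes "0 \<le> x" "x \<le> y"
  shows "profile y - profile x \<le> \<alpha>/2 * (y - x)"
proof -
  have "2 * slope (block x) * (y - x) \<le> 2 * slope_max * (y - x)"
    using slope_le assms by (intro mult_right_mono) auto
  also have "\<dots> \<le> \<alpha>/2 * (y - x)"
    using assms by (intro mult_right_mono) (auto simp: slope_max_def)
  finally show ?thesis using profile_lipschitz[OF assms] by linarith
qed

lemma slope_block_tendsto_0: "((\<lambda>z. slope (block z)) \<longlongrightarrow> 0) at_top"
proof (rule Lim_null_comparison)
  show "\<forall>\<^sub>F z in at_top. norm (slope (block z)) \<le> slope_max / log 2 z"
    using eventually_ge_at_top[of "2::real"]
  proof eventually_elim
    case (elim z)
    have lg: "log 2 z \<ge> 1" using elim by simp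
    hence "log 2 z < real (block z) + 1" by (simp add: block_def)
    hence "slope_max / (real (block z) + 1) \<le> slope_max / log 2 z"
      using slope_max_pos lg by (intro divide_left_mono) auto
    thus ?case using slope_max_pos by (simp add: slope_def)
  qed
  have "filterlim (\<lambda>z. log 2 z) at_top at_top" by real_asymp
  thus "((\<lambda>z. slope_max / log 2 z) \<longlongrightarrow> 0) at_top"
    by (intro tendsto_divide_0[OF tendsto_const] filterlim_at_top_imp_at_infinity)
qed

lemma profile_diff_tendsto_0:
  assumes u: "filterlim u at_top F" and v: "filterlim v at_top F"
    and B: "eventually (\<lambda>x. \<bar>v x - u x\<bar> \<le> B) F"
  shows "((\<lambda>x. profile (v x) - profile (u x)) \<longlongrightarrow> 0) F"
proof (rule Lim_null_comparison)
  show "eventually (\<lambda>x. norm (profile (v x) - profile (u x))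
          \<le> 2 * (slope (block (u x)) + slope (block (v x))) * B) F"
    using B eventually_ge_at_top[of 0, THEN filterlim_iff[THEN iffD1, OF u, rule_format]]
      eventually_ge_at_top[of 0, THEN filterlim_iff[THEN iffD1, OF v, rule_format]]
  proof eventually_elim
    case (elim x)
    have "0 \<le> 2 * (slope (block (u x)) + slope (block (v x)))"
      using slope_nonneg by (simp add: add_nonneg_nonneg)
    thus ?case using profile_lipschitz_sym[of "u x" "v x"] elim
      by (smt (verit) mult_left_mono real_norm_def)
  qed
  show "((\<lambda>x. 2 * (slope (block (u x)) + slope (block (v x))) * B) \<longlongrightarrow> 0) F"
    using filterlim_compose[OF slope_block_tendsto_0 u] filterlim_compose[OF slope_block_tendsto_0 v]
    by (auto intro!: tendsto_eq_intros)
qed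

definition tail :: "real \<Rightarrow> real" where
  "tail x = exp (profile (ln x) - \<alpha> * ln x)"

definition tail_nat :: "nat \<Rightarrow> real" where
  "tail_nat n = (if n = 0 then 1 else tail (real n))"

definition law :: "real measure" where
  "law = measure_pmf (map_pmf real (survival_pmf tail_nat))"

lemma tail_pos: "tail x > 0"
  by (simp add: tail_def)

lemma tail_nat_pos: "tail_nat n > 0"
  by (simp add: tail_nat_def tail_pos)

lemma tail_antimono:
  assumes "1 \<le> x" "x \<le> y"
  shows "tail y \<le> tail x"
proof -
  have l: "0 \<le> ln x" "ln x \<le> ln y" using assms by auto
  have "profile (ln y) - profile (ln x) \<le> \<alpha>/2 * (ln y - ln x)"
    by (rule profile_increment_le[OF l])
  also have "\<dots> \<le> \<alpha> * (ln y - ln x)" using alpha_pos l by (intro mult_right_mono) auto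
  finally show ?thesis unfolding tail_def by (simp add: right_diff_distrib)
qed

lemma tail_le_powr:
  assumes "1 \<le> x"
  shows "tail x \<le> x powr (-\<alpha>/2)"
proof -
  have "profile (ln x) - profile 0 \<le> \<alpha>/2 * (ln x - 0)"
    using assms by (intro profile_increment_le) auto
  hence "profile (ln x) - \<alpha> * ln x \<le> -\<alpha>/2 * ln x" using profile_0 by simp
  thus ?thesis using assms by (simp add: tail_def powr_def)
qed

lemma tail_nat_Suc_le: "tail_nat (Suc n) \<le> tail_nat n"
proof (cases n)
  case 0
  thus ?thesis using tail_antimono[of 1 1] by (simp add: tail_nat_def tail_def profile_0)
next
  case (Suc m)
  thus ?thesis using tail_antimono[of "real n" "real (Suc n)"] by (simp add: tail_nat_def)
qed

lemma tail_nat_tendsto_0: "tail_nat \<longlonglongrightarrow> 0"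
proof (rule Lim_null_comparison)
  show "\<forall>\<^sub>F n in sequentially. norm (tail_nat n) \<le> real n powr (-\<alpha>/2)"
    using eventually_ge_at_top[of "1::nat"]
    by eventually_elim (use tail_le_powr tail_pos in \<open>auto simp: tail_nat_def abs_of_pos\<close>)
  show "(\<lambda>n. real n powr (-\<alpha>/2)) \<longlonglongrightarrow> 0"
    using alpha_pos by (intro tendsto_neg_powr filterlim_real_sequentially) auto
qed

lemma prob_space_law: "prob_space law"
  by (simp add: law_def measure_pmf.prob_space_axioms)

lemma law_tail:
  assumes "t > 0"
  shows "measure law {x\<in>space law. t \<le> max 0 x} = tail_nat (nat \<lceil>t\<rceil>)"
proof -
  have "{n::nat. t \<le> real n} = {nat \<lceil>t\<rceil>..}"
    using assms by (auto simp: nat_le_iff ceiling_le_iff)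
  moreover have "measure law {x\<in>space law. t \<le> max 0 x}
                   = measure_pmf.prob (survival_pmf tail_nat) {n::nat. t \<le> real n}"
    using assms by (simp add: law_def)
  ultimately show ?thesis
    using prob_survival_pmf_atLeast[of tail_nat] tail_nat_Suc_le tail_nat_tendsto_0
    by (simp add: tail_nat_def)
qed

lemma tail_nat_ceiling:
  assumes "1 \<le> t"
  shows "tail_nat (nat \<lceil>t\<rceil>) = tail (real_of_int \<lceil>t\<rceil>)"
  using assms by (simp add: tail_nat_def)

lemma tail_nat_ceiling_le:
  assumes "1 \<le> t"
  shows "tail_nat (nat \<lceil>t\<rceil>) \<le> tail t"
  using tail_antimono[OF assms] assms by (simp add: tail_nat_ceiling)

definition excess :: "nat \<Rightarrow> real" where
  "excess j = (exp (profile (real j)) - 1) / real j"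

definition tent_radius :: "nat \<Rightarrow> real" where
  "tent_radius k = max 0 (tent_height k) / slope k"

lemma excess_nonneg: "excess j \<ge> 0"
  using profile_nonneg[of "real j"] by (simp add: excess_def)

lemma tent_radius_le: "tent_radius k \<le> real k * (real k + 1) / slope_max"
proof -
  have "max 0 (tent_height k) / slope k \<le> real k / slope k"
    using tent_height_le slope_max_pos by (intro divide_right_mono) (auto simp: slope_def)
  thus ?thesis by (simp add: tent_radius_def slope_def)
qed

lemma excess_in_block:
  assumes j: "2^k \<le> j" "j < 2^(k+1)"
  shows "excess j \<le> (if \<bar>real j - centre k\<bar> \<le> tent_radius k then 1 / (real k + 1)^4 else 0)"
proof -
  have jr: "2^k \<le> real j" "real j < 2^(k+1)"
    using j by (metis of_nat_le_iff of_nat_numeral of_nat_power,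
                metis of_nat_less_iff of_nat_numeral of_nat_power)
  have j0: "0 < j" using j(1) one_le_power[of "2::nat" k] by linarith
  have pj: "profile (real j) = tent k (real j)" using profile_in_block[OF jr] .
  show ?thesis
  proof (cases "tent k (real j) = 0")
    case True
    thus ?thesis using pj by (simp add: excess_def)
  next
    case False
    hence pos: "tent_height k - slope k * \<bar>real j - centre k\<bar> > 0"
      and tj: "tent k (real j) = tent_height k - slope k * \<bar>real j - centre k\<bar>"
      by (auto simp: tent_def max_def split: if_splits)
    have sp: "slope k > 0" using slope_max_pos by (simp add: slope_def)
    have "tent_height k > 0" using pos sp by (smt (verit) mult_nonneg_nonneg abs_ge_zero)
    hence in_radius: "\<bar>real j - centre k\<bar> \<le> tent_radius k"
      using pos sp by (simp add: tent_radius_def field_simps)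
    have "tent_height k \<le> ln (2^k / (real k + 1)^4)"
      by (simp add: tent_height_def height_cap_def)
    moreover have "tent k (real j) \<le> tent_height k" using tj sp by simp
    ultimately have "tent k (real j) \<le> ln (2^k / (real k + 1)^4)" by linarith
    hence "exp (tent k (real j)) \<le> exp (ln (2^k / (real k + 1)^4))" by (simp only: exp_le_cancel_iff)
    also have "\<dots> = 2^k / (real k + 1)^4" by simp
    finally have "exp (tent k (real j)) \<le> 2^k / (real k + 1)^4" .
    hence "exp (profile (real j)) - 1 \<le> 2^k / (real k + 1)^4" using pj by simp
    hence "excess j \<le> (2^k / (real k + 1)^4) / real j"
      unfolding excess_def using jr by (intro divide_right_mono) auto
    also have "\<dots> \<le> (2^k / (real k + 1)^4) / 2^k"
      using jr j0 by (intro divide_left_mono mult_pos_pos) auto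
    also have "\<dots> = 1 / (real k + 1)^4" by simp
    finally show ?thesis using in_radius by simp
  qed
qed

lemma block_excess_sum_le:
  "(\<Sum>j\<in>{2^k..<2^(k+1)}. excess j) \<le> (2 / slope_max + 1) / (real k + 1)^2"
proof -
  define I where "I = {j::nat. centre k - tent_radius k \<le> real j \<and> real j \<le> centre k + tent_radius k}"
  define A where "A = {j\<in>{2^k..<2^(k+1)::nat}. \<bar>real j - centre k\<bar> \<le> tent_radius k}"
  have r0: "tent_radius k \<ge> 0" using slope_nonneg by (simp add: tent_radius_def)
  have "(\<Sum>j\<in>{2^k..<2^(k+1)}. excess j)
          \<le> (\<Sum>j\<in>{2^k..<2^(k+1)::nat}.
               if \<bar>real j - centre k\<bar> \<le> tent_radius k then 1 / (real k + 1)^4 else 0)"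
    by (intro sum_mono excess_in_block) auto
  also have "\<dots> = (\<Sum>j\<in>A. 1 / (real k + 1)^4)"
    unfolding A_def by (subst sum.inter_filter) auto
  also have "\<dots> = real (card A) / (real k + 1)^4" by simp
  also have "\<dots> \<le> (2 * tent_radius k + 1) / (real k + 1)^4"
  proof (intro divide_right_mono)
    have "A \<subseteq> I" by (auto simp: A_def I_def)
    hence "card A \<le> card I" by (intro card_mono) (auto simp: I_def finite_nat_interval)
    thus "real (card A) \<le> 2 * tent_radius k + 1"
      using card_nat_interval_le[of "centre k - tent_radius k" "centre k + tent_radius k"] r0
      unfolding I_def by linarith
  qed simp
  also have "\<dots> \<le> (2 / slope_max + 1) * (real k + 1)^2 / (real k + 1)^4"
  proof (intro divide_right_mono)
    have "2 * tent_radius k \<le> 2 / slope_max * (real k + 1)^2"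
      using tent_radius_le[of k] slope_max_pos
      by (simp add: power2_eq_square field_simps mult_right_mono)
    moreover have "1 \<le> (real k + 1)^2" by (simp add: one_le_power)
    moreover have "(2 / slope_max + 1) * (real k + 1)^2 = 2 / slope_max * (real k + 1)^2 + (real k + 1)^2"
      by (simp add: distrib_right)
    ultimately show "2 * tent_radius k + 1 \<le> (2 / slope_max + 1) * (real k + 1)^2"
      by linarith
  qed simp
  also have "\<dots> = (2 / slope_max + 1) / (real k + 1)^2"
  proof -
    have "c * x^2 / x^4 = c / x^2" if "x > 0" for c x :: real
      using that by (simp add: eval_nat_numeral field_simps)
    then show ?thesis by simp
  qed
  finally show ?thesis .
qed

lemma sum_excess_dyadic: "(\<Sum>j<2^K. excess j) = (\<Sum>k<K. \<Sum>j\<in>{2^k..<2^(k+1)}. excess j)"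
proof (induction K)
  case 0
  thus ?case by (simp add: excess_def)
next
  case (Suc K)
  have "(\<Sum>j\<in>{0..<2^Suc K}. excess j) = (\<Sum>j\<in>{0..<2^K}. excess j) + (\<Sum>j\<in>{2^K..<2^Suc K}. excess j)"
    by (rule sum.atLeastLessThan_concat[symmetric]) auto
  thus ?case using Suc by (simp add: atLeast0LessThan)
qed

lemma summable_excess: "summable excess"
proof (rule summableI_nonneg_bounded[OF excess_nonneg])
  fix n
  have s2: "summable (\<lambda>k. 1 / (real k + 1)^2)"
    using sums_summable[OF inverse_squares_sums] by (simp add: add.commute)
  have "(\<Sum>j<n. excess j) \<le> (\<Sum>j<2^n. excess j)"
    by (intro sum_mono2) (auto simp: excess_nonneg less_exp intro: less_imp_le_nat order.strict_trans2)
  also have "\<dots> \<le> (\<Sum>k<n. (2 / slope_max + 1) * (1 / (real k + 1)^2))"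
    unfolding sum_excess_dyadic using block_excess_sum_le by (intro sum_mono) simp
  also have "\<dots> \<le> (2 / slope_max + 1) * (\<Sum>k. 1 / (real k + 1)^2)"
    unfolding sum_distrib_left[symmetric] using slope_max_pos
    by (intro mult_left_mono sum_le_suminf[OF s2]) auto
  finally show "(\<Sum>j<n. excess j) \<le> (2 / slope_max + 1) * (\<Sum>k. 1 / (real k + 1)^2)" .
qed

lemma tail_term_le:
  assumes p: "0 < p" "p < \<alpha>"
  shows "exp ((real j + 1) * p) * tail (exp (real j))
           \<le> exp p * (exp (-(\<alpha> - p)) ^ j + excess j / (\<alpha> - p))"
proof -
  define e where "e = \<alpha> - p"
  have e0: "e > 0" using p by (simp add: e_def)
  have "exp ((real j + 1) * p) * tail (exp (real j))
          = exp p * (exp (- e * real j) + exp (- e * real j) * (exp (profile (real j)) - 1))"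
    by (simp add: tail_def e_def mult_exp_exp algebra_simps)
  also have "\<dots> \<le> exp p * (exp (-e) ^ j + excess j / e)"
  proof -
    have "exp (- e * real j) * (exp (profile (real j)) - 1) \<le> excess j / e"
    proof (cases "j = 0")
      case True
      thus ?thesis by (simp add: excess_def profile_0)
    next
      case False
      have "e * real j < exp (e * real j)"
        using exp_ge_add_one_self[of "e * real j"] by linarith
      hence "exp (- e * real j) \<le> 1 / (e * real j)"
        using e0 False by (simp add: exp_minus field_simps)
      hence "exp (- e * real j) * (exp (profile (real j)) - 1)
               \<le> 1 / (e * real j) * (exp (profile (real j)) - 1)"
        using profile_nonneg by (intro mult_right_mono) auto
      thus ?thesis by (simp add: excess_def mult.commute)
    qed
    moreover have "exp (- e * real j) = exp (-e) ^ j"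
      by (simp add: exp_of_nat_mult[symmetric] mult.commute)
    ultimately show ?thesis by (intro mult_left_mono) auto
  qed
  finally show ?thesis by (simp add: e_def)
qed

definition moment_const :: real where
  "moment_const = \<alpha> + exp \<alpha> * (1 + \<alpha> + suminf excess)"

lemma moment_const_pos: "moment_const > 0"
  using suminf_nonneg[OF summable_excess excess_nonneg] alpha_pos
  by (simp add: moment_const_def add_pos_nonneg)

lemma geometric_series_le:
  fixes e :: real
  assumes "e > 0"
  shows "1 / (1 - exp (-e)) \<le> (1 + e) / e"
proof -
  have "exp (-e) \<le> 1 / (1 + e)"
    using exp_ge_add_one_self[of e] assms by (simp add: exp_minus field_simps)
  hence "e / (1 + e) \<le> 1 - exp (-e)" using assms by (simp add: field_simps)
  hence "1 / (1 - exp (-e)) \<le> 1 / (e / (1 + e))"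
    using assms by (intro divide_left_mono) auto
  thus ?thesis by simp
qed

lemma law_moment_le:
  assumes p: "0 < p" "p < \<alpha>"
  shows "(\<integral>\<^sup>+x. ennreal (max 0 x powr p) \<partial>law) \<le> ennreal (moment_const / (\<alpha> - p))"
proof -
  define e where "e = \<alpha> - p"
  have e0: "e > 0" using p by (simp add: e_def)
  define D where "D = suminf excess"
  have D0: "D \<ge> 0" using suminf_nonneg[OF summable_excess excess_nonneg] by (simp add: D_def)
  define g where "g = (\<lambda>j. exp p * (exp (-e) ^ j + excess j / e))"
  have g_sums: "g sums (exp p * (1 / (1 - exp (-e)) + D / e))"
    unfolding g_def D_def using e0
    by (intro sums_mult sums_add geometric_sums sums_divide summable_sums summable_excess) auto
  have g0: "\<And>j. g j \<ge> 0" using excess_nonneg e0 by (auto simp: g_def)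
  interpret prob_space law by (rule prob_space_law)
  have "(\<integral>\<^sup>+x. ennreal (max 0 x powr p) \<partial>law)
          \<le> 1 + (\<Sum>j. ennreal (exp ((real j + 1) * p)) * emeasure law {x\<in>space law. exp (real j) \<le> max 0 x})"
    using nn_integral_powr_le_tail_series[of "\<lambda>x. x" p] p by (simp add: law_def)
  also have "\<dots> \<le> 1 + (\<Sum>j. ennreal (g j))"
  proof (intro add_left_mono suminf_le summableI)
    fix j
    have "emeasure law {x\<in>space law. exp (real j) \<le> max 0 x} \<le> ennreal (tail (exp (real j)))"
      using law_tail[of "exp (real j)"] tail_nat_ceiling_le[of "exp (real j)"]
      by (simp add: emeasure_eq_measure ennreal_leI)
    hence "ennreal (exp ((real j + 1) * p)) * emeasure law {x\<in>space law. exp (real j) \<le> max 0 x}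
             \<le> ennreal (exp ((real j + 1) * p) * tail (exp (real j)))"
      by (simp add: ennreal_mult' mult_left_mono)
    also have "\<dots> \<le> ennreal (g j)"
      unfolding g_def e_def by (intro ennreal_leI tail_term_le p)
    finally show "ennreal (exp ((real j + 1) * p)) * emeasure law {x\<in>space law. exp (real j) \<le> max 0 x}
                    \<le> ennreal (g j)" .
  qed
  also have "\<dots> = ennreal (1 + exp p * (1 / (1 - exp (-e)) + D / e))"
    using suminf_ennreal2[OF g0 sums_summable[OF g_sums]] sums_unique[OF g_sums]
      suminf_nonneg[OF sums_summable[OF g_sums] g0]
    by (simp add: ennreal_plus)
  also have "\<dots> \<le> ennreal (moment_const / e)"
  proof (intro ennreal_leI)
    have "1 / (1 - exp (-e)) \<le> (1 + \<alpha>) / e"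
      using geometric_series_le[OF e0] e0 p
      by (smt (verit) divide_right_mono e_def)
    hence "exp p * (1 / (1 - exp (-e)) + D / e) \<le> exp \<alpha> * ((1 + \<alpha>) / e + D / e)"
      using p D0 e0 by (intro mult_mono add_mono) auto
    also have "\<dots> = exp \<alpha> * (1 + \<alpha> + D) / e" by (simp add: add_divide_distrib[symmetric])
    finally have "exp p * (1 / (1 - exp (-e)) + D / e) \<le> exp \<alpha> * (1 + \<alpha> + D) / e" .
    moreover have "1 \<le> \<alpha> / e" using e0 p by (simp add: e_def)
    moreover have "moment_const / e = \<alpha> / e + exp \<alpha> * (1 + \<alpha> + D) / e"
      by (simp add: moment_const_def D_def add_divide_distrib)
    ultimately show "1 + exp p * (1 / (1 - exp (-e)) + D / e) \<le> moment_const / e" by linarith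
  qed
  finally show ?thesis by (simp add: e_def)
qed

lemma eventually_height_target_le:
  assumes r: "0 \<le> r" and h_growth: "eventually (\<lambda>t. ln (h t) < r * ln (ln t)) at_top"
  shows "eventually (\<lambda>k. height_target k \<le> 1 + r * ((real k + 1) * ln 2)) sequentially"
proof -
  have "filterlim (\<lambda>k::nat. exp (2^(k+1)::real)) at_top sequentially" by real_asymp
  hence "eventually (\<lambda>k. ln (h (exp (2^(k+1)))) < r * ln (ln (exp (2^(k+1))))) sequentially"
    using h_growth by (rule filterlim_iff[THEN iffD1, rule_format])
  thus ?thesis
  proof eventually_elim
    case (elim k)
    have "ln (ln (exp (2^(k+1)::real))) = (real k + 1) * ln 2"
      using ln_realpow[of 2 "Suc k"] by simp
    thus ?case using elim r by (cases "h (exp (2^(k+1))) \<le> 1") (auto simp: height_target_def)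
  qed
qed

lemma eventually_le_height_cap:
  assumes r: "0 \<le> r" "r < 1"
  shows "eventually (\<lambda>k. 1 + r * ((real k + 1) * ln 2) \<le> height_cap k) sequentially"
proof -
  have "(\<lambda>k::nat. (1 + ln 2 + 4 * ln (real k + 1)) / real k) \<longlonglongrightarrow> 0" by real_asymp
  hence e1: "eventually (\<lambda>k. (1 + ln 2 + 4 * ln (real k + 1)) / real k < (1 - r) * ln 2) sequentially"
    using r by (intro order_tendstoD(2)) auto
  have "(\<lambda>k::nat. (real k + 2) * (2 * (real k + 1)) / 2^k) \<longlonglongrightarrow> 0" by real_asymp
  hence e2: "eventually (\<lambda>k. (real k + 2) * (2 * (real k + 1)) / 2^k < slope_max) sequentially"
    using slope_max_pos by (intro order_tendstoD(2)) auto
  show ?thesis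
    using e1 e2 eventually_gt_at_top[of "0::nat"]
  proof eventually_elim
    case (elim k)
    have "1 + ln 2 + 4 * ln (real k + 1) < (1 - r) * ln 2 * real k"
      using elim by (simp add: divide_less_eq)
    moreover have "r * ln 2 \<le> 1 * ln 2" using r by (intro mult_right_mono) auto
    moreover have "(1 - r) * ln 2 * real k = real k * ln 2 - r * (real k * ln 2)"
      by (simp add: algebra_simps)
    moreover have "r * ((real k + 1) * ln 2) = r * ln 2 + r * (real k * ln 2)"
      by (simp add: algebra_simps)
    ultimately have "1 + r * ((real k + 1) * ln 2) \<le> real k * ln 2 - 4 * ln (real k + 1)"
      by linarith
    also have "\<dots> = ln (2^k / (real k + 1)^4)"
      by (simp add: ln_div ln_realpow)
    finally have b1: "1 + r * ((real k + 1) * ln 2) \<le> ln (2^k / (real k + 1)^4)" .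
    have "(real k + 1) * ln 2 \<le> real k + 1" using ln_2_less_1 by (intro mult_left_le) auto
    moreover have "r * ((real k + 1) * ln 2) \<le> (real k + 1) * ln 2"
      using r by (intro mult_left_le_one_le) auto
    ultimately have "1 + r * ((real k + 1) * ln 2) \<le> real k + 2" by linarith
    also have "\<dots> \<le> slope_max * 2^k / (2 * (real k + 1))"
      using elim(2) by (simp add: field_simps)
    finally show ?case using b1 by (simp add: height_cap_def)
  qed
qed

lemma eventually_tent_height_eq_target:
  assumes "0 \<le> r" "r < 1" and "eventually (\<lambda>t. ln (h t) < r * ln (ln t)) at_top"
  shows "eventually (\<lambda>k. tent_height k = height_target k) sequentially"
  using eventually_height_target_le[OF assms(1,3)] eventually_le_height_cap[OF assms(1,2)]
  by eventually_elim (simp add: tent_height_def)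

text \<open>The peak of the \<open>k\<close>-th tent sits at \<open>ln t = centre k \<le> 2^(k+1)\<close>, hence \<open>h t \<le> h (exp (2^(k+1)))\<close>.\<close>

lemma tail_at_peak_ge:
  assumes h_mono: "mono_on {0..} h" and k: "k \<ge> 2" and Hk: "tent_height k = height_target k"
  defines "t \<equiv> real_of_int \<lceil>exp (centre k)\<rceil>"
  shows "h t \<le> t powr \<alpha> * tail t"
proof -
  have c0: "centre k \<ge> 0" by (simp add: centre_def)
  have t0: "t > 0" unfolding t_def by (smt (verit) exp_gt_zero le_of_int_ceiling)
  have "0 \<le> ln t - centre k" "ln t - centre k \<le> 1 / exp (centre k)"
    using ln_ceiling_minus_ln_bounds[of "exp (centre k)"] c0 by (simp_all add: t_def)
  moreover have "1 / exp (centre k) \<le> 1" using c0 by simp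
  ultimately have lt: "centre k \<le> ln t" "ln t \<le> centre k + 1" by linarith+
  have "(2::real)^k \<ge> 4" using power_increasing[OF k, of "2::real"] by simp
  hence blk: "2^k \<le> ln t" "ln t < 2^(k+1)" "centre k + 1 \<le> 2^(k+1)"
    using lt by (auto simp: centre_def)
  have "slope k * \<bar>ln t - centre k\<bar> \<le> slope k * 1"
    using lt slope_nonneg by (intro mult_left_mono) auto
  hence "profile (ln t) \<ge> tent_height k - slope k"
    using profile_in_block[OF blk(1,2)] by (simp add: tent_def)
  hence "profile (ln t) \<ge> ln (max 1 (h (exp (2^(k+1)))))"
    using Hk slope_le[of k] slope_max_le_1 by (simp add: height_target_def)
  hence "max 1 (h (exp (2^(k+1)))) \<le> exp (profile (ln t))"
    by (metis exp_le_cancel_iff exp_ln max.strict_coboundedI1 zero_less_one)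
  moreover have "h t \<le> h (exp (2^(k+1)))"
  proof (rule mono_onD[OF h_mono])
    have "ln t \<le> 2^(k+1)" using blk lt by linarith
    thus "t \<le> exp (2^(k+1))" using t0 by (metis exp_le_cancel_iff exp_ln)
  qed (use t0 in auto)
  moreover have "t powr \<alpha> * tail t = exp (profile (ln t))"
    using t0 by (simp add: tail_def powr_def mult_exp_exp)
  ultimately show ?thesis by linarith
qed

lemma law_limsup_ge_1:
  assumes h_mono: "mono_on {0..} h" and h_infty: "filterlim h at_top at_top"
    and r: "0 \<le> r" "r < 1" and h_growth: "eventually (\<lambda>t. ln (h t) < r * ln (ln t)) at_top"
  shows "Limsup at_top (\<lambda>t. ereal (t powr \<alpha> * measure law {x\<in>space law. max 0 x \<ge> t} / h t)) \<ge> 1"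
proof (rule Limsup_greatest)
  fix P :: "real \<Rightarrow> bool" assume "eventually P at_top"
  moreover have "eventually (\<lambda>t. 1 \<le> h t) at_top" using h_infty by (simp add: filterlim_at_top)
  ultimately have "eventually (\<lambda>t. P t \<and> 1 \<le> h t) at_top" by (rule eventually_conj)
  then obtain T where T: "\<And>t. t \<ge> T \<Longrightarrow> P t \<and> 1 \<le> h t"
    unfolding eventually_at_top_linorder by blast
  obtain K where K: "\<And>k. k \<ge> K \<Longrightarrow> tent_height k = height_target k"
    using eventually_tent_height_eq_target[OF r h_growth] by (auto simp: eventually_sequentially)
  define k where "k = max (max K 2) (nat \<lceil>T\<rceil>)"
  define t where "t = real_of_int \<lceil>exp (centre k)\<rceil>"
  have "T \<le> real (nat \<lceil>T\<rceil>)" by (rule real_nat_ceiling_ge)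
  also have "\<dots> \<le> real k" by (simp add: k_def)
  also have "\<dots> \<le> real (2^k)" using less_exp[of k] by simp
  also have "\<dots> \<le> centre k" by (simp add: centre_def)
  also have "\<dots> \<le> exp (centre k)" using exp_ge_add_one_self[of "centre k"] by linarith
  also have "\<dots> \<le> t" by (simp add: t_def)
  finally have "T \<le> t" .
  have t1: "1 \<le> t" by (simp add: t_def)
  have "tent_height k = height_target k" by (rule K) (simp add: k_def)
  hence "h t \<le> t powr \<alpha> * tail t"
    unfolding t_def by (intro tail_at_peak_ge[OF h_mono]) (simp_all add: k_def)
  moreover have "measure law {x\<in>space law. max 0 x \<ge> t} = tail t"
    using law_tail[of t] tail_nat_ceiling[of t] t1 by (simp add: t_def)
  ultimately have "1 \<le> t powr \<alpha> * measure law {x\<in>space law. max 0 x \<ge> t} / h t"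
    using T[OF \<open>T \<le> t\<close>] by (simp add: le_divide_eq)
  hence "ereal 1 \<le> ereal (t powr \<alpha> * measure law {x\<in>space law. max 0 x \<ge> t} / h t)"
    by simp
  also have "\<dots> \<le> (SUP s\<in>Collect P. ereal (s powr \<alpha> * measure law {x\<in>space law. max 0 x \<ge> s} / h s))"
    using T[OF \<open>T \<le> t\<close>] by (intro SUP_upper) auto
  finally show "1 \<le> (SUP s\<in>Collect P. ereal (s powr \<alpha> * measure law {x\<in>space law. max 0 x \<ge> s} / h s))"
    by (simp only: one_ereal_def)
qed

lemma tail_ratio: "tail y / tail x = exp ((profile (ln y) - profile (ln x)) - \<alpha> * (ln y - ln x))"
  unfolding tail_def exp_diff[symmetric] by (simp add: algebra_simps)

lemma law_tail_regularly_varying: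
  "regularly_varying (\<lambda>t. measure law {x\<in>space law. max 0 x \<ge> t}) (-\<alpha>)"
  unfolding regularly_varying_def
proof (intro conjI allI impI)
  fix t :: real assume "t > 0"
  thus "measure law {x\<in>space law. max 0 x \<ge> t} > 0" by (simp add: law_tail tail_nat_pos)
next
  fix c :: real assume c: "c > 0"
  define L where "L = (\<lambda>s::real. ln (real_of_int \<lceil>s\<rceil>))"
  have ct: "filterlim (\<lambda>t. c * t) at_top at_top"
    by (rule filterlim_tendsto_pos_mult_at_top[OF tendsto_const c filterlim_ident])
  have L: "filterlim L at_top at_top" unfolding L_def by (rule filterlim_ln_ceiling_at_top)
  have D: "((\<lambda>t. L (c * t) - L t) \<longlongrightarrow> ln c) at_top"
    unfolding L_def by (rule tendsto_ln_ceiling_scale[OF c])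
  have "eventually (\<lambda>t. ln c - 1 < L (c * t) - L t) at_top"
    by (rule order_tendstoD(1)[OF D]) simp
  moreover have "eventually (\<lambda>t. L (c * t) - L t < ln c + 1) at_top"
    by (rule order_tendstoD(2)[OF D]) simp
  ultimately have "eventually (\<lambda>t. \<bar>L (c * t) - L t\<bar> \<le> \<bar>ln c\<bar> + 1) at_top"
    by eventually_elim linarith
  hence P: "((\<lambda>t. profile (L (c * t)) - profile (L t)) \<longlongrightarrow> 0) at_top"
    by (rule profile_diff_tendsto_0[OF L filterlim_compose[OF L ct]])
  have "((\<lambda>t. exp ((profile (L (c * t)) - profile (L t)) - \<alpha> * (L (c * t) - L t)))
          \<longlongrightarrow> exp (0 - \<alpha> * ln c)) at_top"
    by (intro tendsto_intros P D)
  moreover have "exp (0 - \<alpha> * ln c) = c powr (-\<alpha>)" using c by (simp add: powr_def)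
  moreover have "eventually (\<lambda>t. exp ((profile (L (c * t)) - profile (L t)) - \<alpha> * (L (c * t) - L t))
      = measure law {x\<in>space law. max 0 x \<ge> c * t} / measure law {x\<in>space law. max 0 x \<ge> t}) at_top"
    using eventually_ge_at_top[of "max 1 (1/c)"]
  proof eventually_elim
    case (elim t)
    hence "1 \<le> t" "1 \<le> c * t" using c by (auto simp: field_simps)
    thus ?case
      using law_tail[of t] law_tail[of "c * t"] tail_nat_ceiling[of t] tail_nat_ceiling[of "c * t"]
      by (simp add: L_def tail_ratio)
  qed
  ultimately show "((\<lambda>t. measure law {x\<in>space law. max 0 x \<ge> c * t}
                       / measure law {x\<in>space law. max 0 x \<ge> t}) \<longlongrightarrow> c powr (-\<alpha>)) at_top"
    by (simp add: tendsto_cong)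
qed

end

theorem proposition2p4:
  fixes \<alpha> :: real and h :: "real \<Rightarrow> real"
  assumes alpha_pos: "\<alpha> > 0"
    and h_mono: "mono_on {0..} h"
    and h_nonneg: "\<forall>t\<ge>0. h t \<ge> 0"
    and h_infty: "filterlim h at_top at_top"
    and h_growth: "\<exists>\<rho>\<in>{0<..<1}. eventually (\<lambda>t. ln (h t) < \<rho> * min \<alpha> 1 * ln (ln t)) at_top"
  shows "(\<exists>(M :: real measure) X. prob_space M \<and> X \<in> borel_measurable M \<and>
            (\<forall>x\<in>space M. X x \<ge> 0) \<and>
            (\<exists>C>0. \<forall>p\<in>{0<..<\<alpha>}. (\<integral>\<^sup>+ x. ennreal (X x powr p) \<partial>M) \<le> ennreal (C / (\<alpha> - p))) \<and>
            Limsup at_top (\<lambda>t. ereal (t powr \<alpha> * measure M {x\<in>space M. X x \<ge> t} / h t)) \<ge> 1)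
       \<and> ((\<lambda>t. ln (h t)) \<in> o[at_top](\<lambda>t. ln (ln t)) \<longrightarrow>
          (\<exists>(M :: real measure) X. prob_space M \<and> X \<in> borel_measurable M \<and>
            (\<forall>x\<in>space M. X x \<ge> 0) \<and>
            (\<exists>C>0. \<forall>p\<in>{0<..<\<alpha>}. (\<integral>\<^sup>+ x. ennreal (X x powr p) \<partial>M) \<le> ennreal (C / (\<alpha> - p))) \<and>
            Limsup at_top (\<lambda>t. ereal (t powr \<alpha> * measure M {x\<in>space M. X x \<ge> t} / h t)) \<ge> 1 \<and>
            regularly_varying (\<lambda>t. measure M {x\<in>space M. X x \<ge> t}) (- \<alpha>)))"
proof -
  interpret heavy_tail_construction \<alpha> h by standard (rule alpha_pos)
  obtain \<rho> where \<rho>: "0 < \<rho>" "\<rho> < 1"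
    and growth: "eventually (\<lambda>t. ln (h t) < \<rho> * min \<alpha> 1 * ln (ln t)) at_top"
    using h_growth by auto
  have "\<rho> * min \<alpha> 1 \<le> \<rho>" using \<rho> by (intro mult_left_le) auto
  then have r: "0 \<le> \<rho> * min \<alpha> 1" "\<rho> * min \<alpha> 1 < 1"
    using \<rho> alpha_pos by (simp, linarith)
  define X where "X = (\<lambda>x::real. max 0 x)"
  have measurable: "X \<in> borel_measurable law" by (simp add: law_def X_def)
  have nonneg: "\<forall>x\<in>space law. X x \<ge> 0" by (simp add: X_def)
  have moments: "\<exists>C>0. \<forall>p\<in>{0<..<\<alpha>}. (\<integral>\<^sup>+ x. ennreal (X x powr p) \<partial>law) \<le> ennreal (C / (\<alpha> - p))"
  proof (intro exI[of _ moment_const] conjI ballI)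
    fix p assume "p \<in> {0<..<\<alpha>}"
    then show "(\<integral>\<^sup>+ x. ennreal (X x powr p) \<partial>law) \<le> ennreal (moment_const / (\<alpha> - p))"
      unfolding X_def by (intro law_moment_le) auto
  qed (rule moment_const_pos)
  have limsup: "Limsup at_top (\<lambda>t. ereal (t powr \<alpha> * measure law {x\<in>space law. X x \<ge> t} / h t)) \<ge> 1"
    unfolding X_def by (rule law_limsup_ge_1[OF h_mono h_infty r growth])
  have regular: "regularly_varying (\<lambda>t. measure law {x\<in>space law. X x \<ge> t}) (- \<alpha>)"
    unfolding X_def by (rule law_tail_regularly_varying)
  show ?thesis
    by (intro conjI impI exI[of _ law] exI[of _ X];
        rule prob_space_law measurable nonneg moments limsup regular)
qed

end
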